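(* Let $k$ be a nonnegative integer and let $G$ be a finite simple graph such that every topological minor of $G$ has a vertex of degree at most $k$. Then $G$ is dynamically $(k+3)$-colorable.
   Context: All graphs are finite and simple. A graph $H$ is a topological minor of $G$ if $G$ has a subgraph isomorphic to a subdivision of $H$ (in particular $G$ is a topological minor of itself). Given a proper vertex coloring of a graph, a vertex $v$ is happy if either $v$ has at most one neighbor or $v$ has two neighbors receiving distinct colors. A dynamic $m$-coloring is a proper vertex coloring with at most $m$ colors in which every vertex is happy; a graph is dynamically $m$-colorable if it has one. *)

theory Defs
  imports Main
begin

definition simple_graph :: "'a set \<Rightarrow> 'a set set \<Rightarrow> bool" where
  "simple_graph V E \<longleftrightarrow> finite V \<and>
     (\<forall>e\<in>E. \<exists>u v. u \<noteq> v \<and> u \<in> V \<and> v \<in> V \<and> e = {u, v})"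

definition neighbors :: "'a set set \<Rightarrow> 'a \<Rightarrow> 'a set" where
  "neighbors E v = {u. {u, v} \<in> E}"

definition degree :: "'a set set \<Rightarrow> 'a \<Rightarrow> nat" where
  "degree E v = card (neighbors E v)"

definition is_path :: "'a set set \<Rightarrow> 'a list \<Rightarrow> bool" where
  "is_path E xs \<longleftrightarrow> distinct xs \<and> length xs \<ge> 2 \<and>
     (\<forall>i. Suc i < length xs \<longrightarrow> {xs ! i, xs ! Suc i} \<in> E)"

definition interior :: "'a list \<Rightarrow> 'a set" where
  "interior xs = set (butlast (tl xs))"

text \<open>(VH, EH) is a topological minor of (V, E): (VH, EH) is a simple graph and
  G contains a subgraph isomorphic to a subdivision of it, i.e. there is an injective
  map f of branch vertices and, for every edge {x,y} of H, a path P e in G from f x to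
  f y, such that the interiors of these paths avoid the branch vertices and are
  pairwise disjoint.\<close>
definition topological_minor :: "'b set \<Rightarrow> 'b set set \<Rightarrow> 'a set \<Rightarrow> 'a set set \<Rightarrow> bool" where
  "topological_minor VH EH V E \<longleftrightarrow> simple_graph VH EH \<and>
     (\<exists>f P. inj_on f VH \<and> f ` VH \<subseteq> V \<and>
        (\<forall>e\<in>EH. is_path E (P e) \<and> {hd (P e), last (P e)} = f ` e
                 \<and> interior (P e) \<inter> f ` VH = {}) \<and>
        (\<forall>e1\<in>EH. \<forall>e2\<in>EH. e1 \<noteq> e2 \<longrightarrow> interior (P e1) \<inter> interior (P e2) = {}))"

definition proper_coloring :: "'a set set \<Rightarrow> ('a \<Rightarrow> nat) \<Rightarrow> bool" where
  "proper_coloring E c \<longleftrightarrow> (\<forall>u v. {u, v} \<in> E \<longrightarrow> c u \<noteq> c v)"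

definition happy :: "'a set set \<Rightarrow> ('a \<Rightarrow> nat) \<Rightarrow> 'a \<Rightarrow> bool" where
  "happy E c v \<longleftrightarrow> card (neighbors E v) \<le> 1 \<or>
     (\<exists>u w. u \<in> neighbors E v \<and> w \<in> neighbors E v \<and> c u \<noteq> c w)"

definition dynamic_coloring :: "'a set \<Rightarrow> 'a set set \<Rightarrow> nat \<Rightarrow> ('a \<Rightarrow> nat) \<Rightarrow> bool" where
  "dynamic_coloring V E m c \<longleftrightarrow> proper_coloring E c \<and> c ` V \<subseteq> {..<m} \<and>
     (\<forall>v\<in>V. happy E c v)"

definition dynamically_colorable :: "'a set \<Rightarrow> 'a set set \<Rightarrow> nat \<Rightarrow> bool" where
  "dynamically_colorable V E m \<longleftrightarrow> (\<exists>c. dynamic_coloring V E m c)"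

end

theory Submission
  imports Defs
begin

text \<open>Induction on the topological minors of G. In a minor H take a vertex v of minimum
  degree d \<le> k. If the neighbours of v form a clique, colour H - v; otherwise pick two
  non-adjacent neighbours a, b and colour the minor obtained by replacing the path a v b with
  an edge ab. In both cases v sees at most d + 2 \<le> k + 2 blocked colours: the colours of its
  neighbours, and the unique colour seen by a neighbour u whose other neighbours are
  monochromatic (v must break that tie). For a clique those colours already occur on N(v);
  otherwise only a and b can be monochromatic, since every other neighbour has degree at
  least 3 and keeps two neighbours in the minor, where it is happy.\<close>

section \<open>Paths\<close>

lemma is_path_iff_successively:
  "is_path E p \<longleftrightarrow> distinct p \<and> 2 \<le> length p \<and> successively (\<lambda>x y. {x, y} \<in> E) p"
  unfolding is_path_def successively_conv_nth by auto

lemma hd_interior_last_decomp: "2 \<le> length p \<Longrightarrow> p = hd p # butlast (tl p) @ [last p]"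
  using append_butlast_last_id[of "tl p"] by (cases p) auto

lemma is_path_endpoints:
  assumes "is_path E p"
  shows "set p = {hd p, last p} \<union> interior p" "hd p \<notin> interior p" "last p \<notin> interior p"
    "hd p \<noteq> last p"
proof -
  have "2 \<le> length p" "distinct p" using assms by (auto simp: is_path_def)
  then have "distinct (hd p # butlast (tl p) @ [last p])" "set p = set (hd p # butlast (tl p) @ [last p])"
    using hd_interior_last_decomp by metis+
  then show "set p = {hd p, last p} \<union> interior p" "hd p \<notin> interior p" "last p \<notin> interior p"
    "hd p \<noteq> last p"
    unfolding interior_def by auto
qed

lemma interior_rev [simp]: "interior (rev p) = interior p"
  unfolding interior_def by (metis butlast_rev set_rev butlast_tl rev_swap)

lemma is_path_rev: "is_path E p \<Longrightarrow> is_path E (rev p)"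
  unfolding is_path_iff_successively by (auto simp: insert_commute)

lemma is_path_orient:
  assumes "is_path E p" "{hd p, last p} = {x, y}"
  obtains q where "is_path E q" "hd q = x" "last q = y" "interior q = interior p"
proof (cases "hd p = x")
  case True
  with assms that show ?thesis by (auto simp: doubleton_eq_iff)
next
  case False
  have "p \<noteq> []" using assms(1) by (auto simp: is_path_def)
  with False assms have "hd (rev p) = x" "last (rev p) = y"
    by (auto simp: hd_rev last_rev doubleton_eq_iff)
  with assms(1) that show ?thesis using is_path_rev by force
qed

lemma is_path_append_tl:
  assumes p: "is_path E p" and q: "is_path E q" and "last p = hd q" and "set p \<inter> set q = {hd q}"
  shows "is_path E (p @ tl q)" "hd (p @ tl q) = hd p" "last (p @ tl q) = last q"
    "interior (p @ tl q) = interior p \<union> {hd q} \<union> interior q"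
proof -
  have lp: "2 \<le> length p" using p by (auto simp: is_path_def)
  obtain y T where q_eq: "q = y # T" and "T \<noteq> []"
    using q by (cases q; cases "tl q") (auto simp: is_path_def)
  have "distinct (p @ T)"
  proof -
    have "distinct p" "distinct q" using p q by (auto simp: is_path_def)
    with assms(4) q_eq show ?thesis by auto
  qed
  moreover have "successively (\<lambda>x y. {x, y} \<in> E) (p @ T)"
    using assms q_eq \<open>T \<noteq> []\<close>
    by (auto simp: is_path_iff_successively successively_append_iff successively_Cons)
  ultimately show "is_path E (p @ tl q)" using q_eq lp by (simp add: is_path_iff_successively)
  show "hd (p @ tl q) = hd p" using lp by (cases p) auto
  show "last (p @ tl q) = last q" using q_eq \<open>T \<noteq> []\<close> by simp
  have "set (tl p) = interior p \<union> {last p}"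
    unfolding interior_def by (subst hd_interior_last_decomp[OF lp]) simp
  moreover have "butlast (tl (p @ T)) = tl p @ butlast T"
    using lp \<open>T \<noteq> []\<close> by (cases p) (auto simp: butlast_append)
  ultimately show "interior (p @ tl q) = interior p \<union> {hd q} \<union> interior q"
    using q_eq \<open>last p = hd q\<close> unfolding interior_def by auto
qed

lemma is_path_join:
  assumes p: "is_path E p" "{hd p, last p} = {x, y}" and q: "is_path E q" "{hd q, last q} = {y, z}"
    and "x \<noteq> z" "interior p \<inter> interior q = {}" "x \<notin> interior q" "z \<notin> interior p"
  obtains r where "is_path E r" "{hd r, last r} = {x, z}"
    "interior r = interior p \<union> {y} \<union> interior q"
proof -
  obtain p' where p': "is_path E p'" "hd p' = x" "last p' = y" "interior p' = interior p"
    using is_path_orient[OF p] .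
  obtain q' where q': "is_path E q'" "hd q' = y" "last q' = z" "interior q' = interior q"
    using is_path_orient[OF q] .
  have "set p' \<inter> set q' = {hd q'}"
    using is_path_endpoints[OF p'(1)] is_path_endpoints[OF q'(1)] p' q' assms(5-8) by auto
  from is_path_append_tl[OF p'(1) q'(1) _ this] p' q' that show ?thesis by simp
qed

section \<open>Simple graphs and topological minors\<close>

lemma simple_graph_edgeD: "simple_graph W F \<Longrightarrow> {x, y} \<in> F \<Longrightarrow> x \<in> W \<and> y \<in> W \<and> x \<noteq> y"
  unfolding simple_graph_def by (auto simp: doubleton_eq_iff)

lemma neighbors_subset: "simple_graph W F \<Longrightarrow> neighbors F v \<subseteq> W - {v}"
  unfolding neighbors_def using simple_graph_edgeD by fastforce

lemma finite_neighbors: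
  assumes "simple_graph W F"
  shows "finite (neighbors F v)"
proof (rule finite_subset[OF neighbors_subset[OF assms]])
  show "finite (W - {v})" using assms unfolding simple_graph_def by simp
qed

lemma neighbors_sym: "u \<in> neighbors F w \<longleftrightarrow> w \<in> neighbors F u"
  unfolding neighbors_def by (simp add: insert_commute)

definition edges_avoiding :: "'a set set \<Rightarrow> 'a \<Rightarrow> 'a set set" where
  "edges_avoiding F v = {e \<in> F. v \<notin> e}"

lemma neighbors_edges_avoiding: "w \<noteq> v \<Longrightarrow> neighbors (edges_avoiding F v) w = neighbors F w - {v}"
  unfolding neighbors_def edges_avoiding_def by auto

lemma simple_graph_delete_vertex:
  "simple_graph W F \<Longrightarrow> simple_graph (W - {v}) (edges_avoiding F v)"
  unfolding simple_graph_def edges_avoiding_def by fastforce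

lemma topological_minorI:
  assumes "simple_graph W F" "inj_on f W" "f ` W \<subseteq> V"
    and "\<And>e. e \<in> F \<Longrightarrow> is_path E (P e)" "\<And>e. e \<in> F \<Longrightarrow> {hd (P e), last (P e)} = f ` e"
    and "\<And>e. e \<in> F \<Longrightarrow> interior (P e) \<inter> f ` W = {}"
    and "\<And>e1 e2. e1 \<in> F \<Longrightarrow> e2 \<in> F \<Longrightarrow> e1 \<noteq> e2 \<Longrightarrow> interior (P e1) \<inter> interior (P e2) = {}"
  shows "topological_minor W F V E"
  unfolding topological_minor_def using assms
  by (intro conjI exI[of _ f] exI[of _ P] ballI impI) simp_all

lemma topological_minorE:
  assumes "topological_minor W F V E"
  obtains f P where "simple_graph W F" "inj_on f W" "f ` W \<subseteq> V"
    "\<And>e. e \<in> F \<Longrightarrow> is_path E (P e)" "\<And>e. e \<in> F \<Longrightarrow> {hd (P e), last (P e)} = f ` e"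
    "\<And>e. e \<in> F \<Longrightarrow> interior (P e) \<inter> f ` W = {}"
    "\<And>e1 e2. e1 \<in> F \<Longrightarrow> e2 \<in> F \<Longrightarrow> e1 \<noteq> e2 \<Longrightarrow> interior (P e1) \<inter> interior (P e2) = {}"
proof -
  from assms obtain f P where "simple_graph W F" "inj_on f W" "f ` W \<subseteq> V"
    "\<forall>e\<in>F. is_path E (P e) \<and> {hd (P e), last (P e)} = f ` e \<and> interior (P e) \<inter> f ` W = {}"
    "\<forall>e1\<in>F. \<forall>e2\<in>F. e1 \<noteq> e2 \<longrightarrow> interior (P e1) \<inter> interior (P e2) = {}"
    unfolding topological_minor_def by (elim exE conjE)
  then show thesis by (intro that[of f P]) auto
qed

lemma topological_minor_refl:
  assumes "simple_graph V E"
  shows "topological_minor V E V E"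
proof -
  define P where "P e = (SOME p. distinct p \<and> length p = 2 \<and> set p = e)" for e :: "'a set"
  have P: "\<exists>a b. P e = [a, b] \<and> a \<noteq> b \<and> e = {a, b}" if "e \<in> E" for e
  proof -
    obtain x y where "x \<noteq> y" "e = {x, y}" using assms \<open>e \<in> E\<close> unfolding simple_graph_def by blast
    then have "\<exists>p. distinct p \<and> length p = 2 \<and> set p = e" by (intro exI[of _ "[x, y]"]) auto
    from someI_ex[OF this] have "distinct (P e)" "length (P e) = 2" "set (P e) = e"
      unfolding P_def by auto
    moreover from \<open>length (P e) = 2\<close> obtain a b where "P e = [a, b]"
      by (auto simp: numeral_2_eq_2 length_Suc_conv)
    ultimately show ?thesis by auto
  qed
  have interior_P: "interior (P e) = {}" if "e \<in> E" for e
    using P[OF that] by (auto simp: interior_def)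
  show ?thesis
  proof (rule topological_minorI[OF assms inj_on_id])
    fix e assume "e \<in> E"
    with P[OF this] show "is_path E (P e)" "{hd (P e), last (P e)} = id ` e"
      by (auto simp: is_path_iff_successively)
  qed (use interior_P in auto)
qed

lemma topological_minor_subgraph:
  assumes "topological_minor W F V E" "simple_graph W' F'" "W' \<subseteq> W" "F' \<subseteq> F"
  shows "topological_minor W' F' V E"
proof -
  obtain f P where "simple_graph W F" "inj_on f W" "f ` W \<subseteq> V"
    and path: "\<And>e. e \<in> F \<Longrightarrow> is_path E (P e)"
    and ends: "\<And>e. e \<in> F \<Longrightarrow> {hd (P e), last (P e)} = f ` e"
    and branch: "\<And>e. e \<in> F \<Longrightarrow> interior (P e) \<inter> f ` W = {}"
    and disj: "\<And>e1 e2. e1 \<in> F \<Longrightarrow> e2 \<in> F \<Longrightarrow> e1 \<noteq> e2 \<Longrightarrow> interior (P e1) \<inter> interior (P e2) = {}"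
    using topological_minorE[OF assms(1)] by metis
  show ?thesis
  proof (rule topological_minorI[OF assms(2)])
    show "inj_on f W'" using \<open>inj_on f W\<close> assms(3) by (rule inj_on_subset)
    show "f ` W' \<subseteq> V" using \<open>f ` W \<subseteq> V\<close> assms(3) by blast
  next
    fix e assume "e \<in> F'"
    with assms(4) have "e \<in> F" by blast
    show "is_path E (P e)" "{hd (P e), last (P e)} = f ` e" using path ends \<open>e \<in> F\<close> by blast+
    show "interior (P e) \<inter> f ` W' = {}" using branch[OF \<open>e \<in> F\<close>] assms(3) by blast
  next
    fix e1 e2 assume "e1 \<in> F'" "e2 \<in> F'" "e1 \<noteq> e2"
    with assms(4) show "interior (P e1) \<inter> interior (P e2) = {}" using disj by blast
  qed
qed

lemma topological_minor_suppress_vertex: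
  assumes "topological_minor W F V E" and av: "{a, v} \<in> F" and bv: "{b, v} \<in> F"
    and "a \<noteq> b" "{a, b} \<notin> F"
  shows "topological_minor (W - {v}) (insert {a, b} (edges_avoiding F v)) V E"
proof -
  obtain f P where sg: "simple_graph W F" and "inj_on f W" "f ` W \<subseteq> V"
    and path: "\<And>e. e \<in> F \<Longrightarrow> is_path E (P e)"
    and ends: "\<And>e. e \<in> F \<Longrightarrow> {hd (P e), last (P e)} = f ` e"
    and branch: "\<And>e. e \<in> F \<Longrightarrow> interior (P e) \<inter> f ` W = {}"
    and disj: "\<And>e1 e2. e1 \<in> F \<Longrightarrow> e2 \<in> F \<Longrightarrow> e1 \<noteq> e2 \<Longrightarrow> interior (P e1) \<inter> interior (P e2) = {}"
    using topological_minorE[OF assms(1)] by metis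
  have W: "a \<in> W" "b \<in> W" "v \<in> W" "a \<noteq> v" "b \<noteq> v"
    using simple_graph_edgeD[OF sg av] simple_graph_edgeD[OF sg bv] by auto
  have "{hd (P {a, v}), last (P {a, v})} = {f a, f v}" "{hd (P {b, v}), last (P {b, v})} = {f v, f b}"
    using ends[OF av] ends[OF bv] by (simp_all add: insert_commute)
  moreover have "f a \<noteq> f b" using \<open>inj_on f W\<close> W \<open>a \<noteq> b\<close> by (auto dest: inj_onD)
  moreover have "interior (P {a, v}) \<inter> interior (P {b, v}) = {}"
    using disj[OF av bv] \<open>a \<noteq> b\<close> W by (simp add: doubleton_eq_iff)
  moreover have "f a \<notin> interior (P {b, v})" "f b \<notin> interior (P {a, v})"
    using branch[OF av] branch[OF bv] W by auto
  ultimately obtain R where R: "is_path E R" "{hd R, last R} = {f a, f b}"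
    and interior_R: "interior R = interior (P {a, v}) \<union> {f v} \<union> interior (P {b, v})"
    using is_path_join[OF path[OF av] _ path[OF bv]] by blast
  define P' where "P' e = (if e = {a, b} then R else P e)" for e
  have F0: "e \<in> F" "v \<notin> e" "e \<noteq> {a, b}" if "e \<in> edges_avoiding F v" for e
    using that \<open>{a, b} \<notin> F\<close> unfolding edges_avoiding_def by auto
  have R_disj: "interior R \<inter> interior (P e) = {}" if "e \<in> edges_avoiding F v" for e
  proof -
    have "e \<noteq> {a, v}" "e \<noteq> {b, v}" "f v \<notin> interior (P e)"
      using F0[OF that] branch W by auto
    with disj[OF av] disj[OF bv] F0[OF that] show ?thesis unfolding interior_R by auto
  qed
  have "f v \<notin> f ` (W - {v})" using \<open>inj_on f W\<close> W by (auto dest: inj_onD)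
  then have R_branch: "interior R \<inter> f ` (W - {v}) = {}"
    using branch[OF av] branch[OF bv] unfolding interior_R by auto
  show ?thesis
  proof (rule topological_minorI[where f = f and P = P'])
    show "simple_graph (W - {v}) (insert {a, b} (edges_avoiding F v))"
      using simple_graph_delete_vertex[OF sg, of v] W \<open>a \<noteq> b\<close> unfolding simple_graph_def by auto
    show "inj_on f (W - {v})" using \<open>inj_on f W\<close> by (rule inj_on_subset) auto
    show "f ` (W - {v}) \<subseteq> V" using \<open>f ` W \<subseteq> V\<close> by auto
  next
    fix e assume "e \<in> insert {a, b} (edges_avoiding F v)"
    then consider "e = {a, b}" | "e \<in> edges_avoiding F v" by blast
    then show "is_path E (P' e)" "{hd (P' e), last (P' e)} = f ` e"
      "interior (P' e) \<inter> f ` (W - {v}) = {}"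
      by (cases; use R R_branch F0 path ends branch in \<open>force simp: P'_def\<close>)+
  next
    fix e1 e2 assume "e1 \<in> insert {a, b} (edges_avoiding F v)" "e2 \<in> insert {a, b} (edges_avoiding F v)"
      "e1 \<noteq> e2"
    then consider "e1 = {a, b}" "e2 \<in> edges_avoiding F v" | "e2 = {a, b}" "e1 \<in> edges_avoiding F v"
      | "e1 \<in> edges_avoiding F v" "e2 \<in> edges_avoiding F v"
      by blast
    then show "interior (P' e1) \<inter> interior (P' e2) = {}"
    proof cases
      case 1
      with R_disj F0 show ?thesis unfolding P'_def by simp
    next
      case 2
      with R_disj F0 show ?thesis unfolding P'_def by (simp add: Int_commute)
    next
      case 3
      with F0 disj \<open>e1 \<noteq> e2\<close> show ?thesis unfolding P'_def by simp
    qed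
  qed
qed

section \<open>Dynamic colourings\<close>

text \<open>The colours a new colour for v must avoid: those of its neighbours (properness),
  and for each neighbour u the single colour seen by u in G - v, if there is only one
  (happiness of u).\<close>
definition blocked_colors :: "'a set set \<Rightarrow> 'a \<Rightarrow> ('a \<Rightarrow> nat) \<Rightarrow> nat set" where
  "blocked_colors F v c = c ` neighbors F v \<union>
     {x. \<exists>u\<in>neighbors F v. c ` neighbors (edges_avoiding F v) u = {x}}"

lemma proper_coloring_update:
  assumes sg: "simple_graph W F" and c: "proper_coloring (edges_avoiding F v) c"
    and "col \<notin> c ` neighbors F v"
  shows "proper_coloring F (c(v := col))"
  unfolding proper_coloring_def
proof (intro allI impI)
  fix x y assume e: "{x, y} \<in> F"
  show "(c(v := col)) x \<noteq> (c(v := col)) y"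
  proof (cases "x = v \<or> y = v")
    case True
    have "x \<in> neighbors F y" using e by (simp add: neighbors_def)
    moreover from this have "y \<in> neighbors F x" by (rule neighbors_sym[THEN iffD1])
    ultimately show ?thesis using True simple_graph_edgeD[OF sg e] assms(3) by auto
  next
    case False
    with e c show ?thesis unfolding proper_coloring_def edges_avoiding_def by auto
  qed
qed

lemma happy_update_at_neighbor:
  assumes "w \<in> neighbors F v" "w \<noteq> v" "col \<notin> blocked_colors F v c"
  shows "happy F (c(v := col)) w"
proof -
  let ?S = "neighbors (edges_avoiding F v) w"
  have nb: "neighbors F w = insert v ?S" "v \<notin> ?S"
    using assms(1) neighbors_edges_avoiding[OF assms(2)] neighbors_sym[of w F v] by auto
  show ?thesis
  proof (cases "?S = {}")
    case True
    with nb show ?thesis unfolding happy_def by simp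
  next
    case False
    then obtain s where s: "s \<in> ?S" "s \<noteq> v" using nb(2) by blast
    show ?thesis
    proof (cases "\<exists>t\<in>?S. c t \<noteq> c s")
      case True
      then obtain t where "t \<in> ?S" "c t \<noteq> c s" by blast
      with s nb show ?thesis unfolding happy_def
        by (intro disjI2 exI[of _ t] exI[of _ s]) auto
    next
      case False
      with s have "c ` ?S = {c s}" by blast
      with assms(1) have "c s \<in> blocked_colors F v c" unfolding blocked_colors_def by auto
      with assms(3) have "col \<noteq> c s" by blast
      with s nb show ?thesis unfolding happy_def
        by (intro disjI2 exI[of _ v] exI[of _ s]) auto
    qed
  qed
qed

lemma dynamic_coloring_extend:
  assumes sg: "simple_graph W F"
    and F': "edges_avoiding F v \<subseteq> F'"
      "F' \<subseteq> edges_avoiding F v \<union> {{x, y} | x y. x \<in> neighbors F v \<and> y \<in> neighbors F v}"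
    and c: "dynamic_coloring (W - {v}) F' m c" and "happy F c v"
    and "col < m" and col: "col \<notin> blocked_colors F v c"
  shows "dynamic_coloring W F m (c(v := col))"
proof -
  have "v \<notin> neighbors F v" using neighbors_subset[OF sg] by blast
  have "proper_coloring (edges_avoiding F v) c"
    using c F'(1) unfolding dynamic_coloring_def proper_coloring_def by blast
  with sg have "proper_coloring F (c(v := col))"
    using col unfolding blocked_colors_def by (intro proper_coloring_update) auto
  moreover have "(c(v := col)) ` W \<subseteq> {..<m}"
    using c \<open>col < m\<close> unfolding dynamic_coloring_def by auto
  moreover have "happy F (c(v := col)) w" if "w \<in> W" for w
  proof -
    consider "w = v" | "w \<in> neighbors F v" | "w \<noteq> v" "w \<notin> neighbors F v" by blast
    then show ?thesis
    proof cases
      case 1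
      with \<open>happy F c v\<close> \<open>v \<notin> neighbors F v\<close> show ?thesis unfolding happy_def by auto
    next
      case 2
      with \<open>v \<notin> neighbors F v\<close> col show ?thesis by (intro happy_update_at_neighbor) auto
    next
      case 3
      have "neighbors F' w = neighbors (edges_avoiding F v) w"
        using 3(2) F' unfolding neighbors_def by (auto simp: doubleton_eq_iff)
      moreover have "v \<notin> neighbors F w" using 3(2) neighbors_sym[of v F w] by blast
      then have "neighbors F w = neighbors (edges_avoiding F v) w"
        using neighbors_edges_avoiding[OF 3(1)] by auto
      moreover have "happy F' c w" using c that 3(1) unfolding dynamic_coloring_def by auto
      ultimately show ?thesis unfolding happy_def
        using \<open>v \<notin> neighbors F w\<close> by (metis fun_upd_other)
    qed
  qed
  ultimately show ?thesis unfolding dynamic_coloring_def by blast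
qed

lemma blocked_colors_subset:
  "blocked_colors F v c \<subseteq> c ` neighbors F v \<union>
     (\<lambda>u. the_elem (c ` neighbors (edges_avoiding F v) u)) `
       {u \<in> neighbors F v. is_singleton (c ` neighbors (edges_avoiding F v) u)}"
proof -
  have "x \<in> (\<lambda>u. the_elem (c ` neighbors (edges_avoiding F v) u)) `
      {u \<in> neighbors F v. is_singleton (c ` neighbors (edges_avoiding F v) u)}"
    if "u \<in> neighbors F v" "c ` neighbors (edges_avoiding F v) u = {x}" for u x
    using that by (intro image_eqI[of x _ u]) (auto simp: is_singleton_def)
  then show ?thesis unfolding blocked_colors_def by blast
qed

lemma
  assumes "finite (neighbors F v)"
  shows finite_blocked_colors: "finite (blocked_colors F v c)"
    and card_blocked_colors_le: "card (blocked_colors F v c) \<le> card (neighbors F v) +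
      card {u \<in> neighbors F v. is_singleton (c ` neighbors (edges_avoiding F v) u)}"
proof -
  let ?M = "{u \<in> neighbors F v. is_singleton (c ` neighbors (edges_avoiding F v) u)}"
  have "finite ?M" using assms by simp
  with assms show "finite (blocked_colors F v c)"
    by (intro finite_subset[OF blocked_colors_subset]) simp
  have "card (blocked_colors F v c) \<le> card (c ` neighbors F v \<union>
      (\<lambda>u. the_elem (c ` neighbors (edges_avoiding F v) u)) ` ?M)"
    using assms \<open>finite ?M\<close> by (intro card_mono blocked_colors_subset) simp
  also have "\<dots> \<le> card (c ` neighbors F v) +
      card ((\<lambda>u. the_elem (c ` neighbors (edges_avoiding F v) u)) ` ?M)"
    by (rule card_Un_le)
  also have "\<dots> \<le> card (neighbors F v) + card ?M"
    by (intro add_mono card_image_le assms \<open>finite ?M\<close>)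
  finally show "card (blocked_colors F v c) \<le> card (neighbors F v) + card ?M" .
qed

lemma dynamically_colorable_extend:
  assumes "simple_graph W F"
    and "edges_avoiding F v \<subseteq> F'"
      "F' \<subseteq> edges_avoiding F v \<union> {{x, y} | x y. x \<in> neighbors F v \<and> y \<in> neighbors F v}"
    and "dynamic_coloring (W - {v}) F' m c" "happy F c v"
    and "card (blocked_colors F v c) < m"
  shows "dynamically_colorable W F m"
proof -
  have "\<not> {..<m} \<subseteq> blocked_colors F v c"
  proof
    assume "{..<m} \<subseteq> blocked_colors F v c"
    with finite_blocked_colors[OF finite_neighbors[OF assms(1)]]
    have "card {..<m} \<le> card (blocked_colors F v c)" by (rule card_mono)
    with assms(6) show False by simp
  qed
  then obtain col where "col < m" "col \<notin> blocked_colors F v c" by blast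
  with dynamic_coloring_extend[OF assms(1-5)] show ?thesis
    unfolding dynamically_colorable_def by blast
qed

lemma blocked_colors_clique:
  assumes sg: "simple_graph W F"
    and clique: "\<And>a b. a \<in> neighbors F v \<Longrightarrow> b \<in> neighbors F v \<Longrightarrow> a \<noteq> b \<Longrightarrow> {a, b} \<in> F"
    and "2 \<le> card (neighbors F v)"
  shows "blocked_colors F v c = c ` neighbors F v"
proof -
  have "x \<in> c ` neighbors F v"
    if u: "u \<in> neighbors F v" and x: "c ` neighbors (edges_avoiding F v) u = {x}" for u x
  proof -
    have "\<not> neighbors F v \<subseteq> {u}"
    proof
      assume "neighbors F v \<subseteq> {u}"
      then have "card (neighbors F v) \<le> card {u}" by (intro card_mono) simp_all
      with assms(3) show False by simp
    qed
    then obtain w where w: "w \<in> neighbors F v" "w \<noteq> u" by blast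
    with u clique have "{w, u} \<in> F" by blast
    moreover have "v \<notin> {w, u}" using neighbors_subset[OF sg] u w by blast
    ultimately have "w \<in> neighbors (edges_avoiding F v) u"
      unfolding neighbors_def edges_avoiding_def by simp
    then have "c w \<in> c ` neighbors (edges_avoiding F v) u" by (rule imageI)
    with x have "c w = x" by simp
    with w show ?thesis by blast
  qed
  then show ?thesis unfolding blocked_colors_def by blast
qed

lemma monochromatic_neighbors_suppressed:
  assumes sg: "simple_graph W F" and min: "\<And>u. u \<in> W \<Longrightarrow> degree F v \<le> degree F u"
    and ab: "a \<in> neighbors F v" "b \<in> neighbors F v" "a \<noteq> b"
    and happy: "\<And>w. w \<in> W - {v} \<Longrightarrow> happy (insert {a, b} (edges_avoiding F v)) c w"
  shows "{u \<in> neighbors F v. is_singleton (c ` neighbors (edges_avoiding F v) u)} \<subseteq> {a, b}"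
proof (rule subsetI, rule ccontr)
  fix u assume "u \<in> {u \<in> neighbors F v. is_singleton (c ` neighbors (edges_avoiding F v) u)}"
    and "u \<notin> {a, b}"
  then have u: "u \<in> neighbors F v" "is_singleton (c ` neighbors (edges_avoiding F v) u)" by auto
  have uW: "u \<in> W - {v}" using neighbors_subset[OF sg] u(1) by blast
  have "3 = card {a, b, u}" using \<open>u \<notin> {a, b}\<close> \<open>a \<noteq> b\<close> by (auto simp: card_insert_if)
  also have "\<dots> \<le> degree F v"
    unfolding degree_def using ab u(1) finite_neighbors[OF sg] by (intro card_mono) auto
  also have "\<dots> \<le> card (neighbors F u)" using min uW unfolding degree_def by blast
  finally have "2 \<le> card (neighbors (edges_avoiding F v) u)"
    using neighbors_edges_avoiding[of u v F] uW finite_neighbors[OF sg]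
      card_Diff_singleton_if[of "neighbors F u" v]
    by auto
  moreover have "neighbors (insert {a, b} (edges_avoiding F v)) u = neighbors (edges_avoiding F v) u"
    using \<open>u \<notin> {a, b}\<close> unfolding neighbors_def by (auto simp: doubleton_eq_iff)
  ultimately obtain y z where "y \<in> neighbors (edges_avoiding F v) u"
    "z \<in> neighbors (edges_avoiding F v) u" "c y \<noteq> c z"
    using happy[OF uW] unfolding happy_def by auto
  moreover from u(2) obtain x where "c ` neighbors (edges_avoiding F v) u = {x}"
    unfolding is_singleton_def by blast
  ultimately have "c y \<in> {x}" "c z \<in> {x}" "c y \<noteq> c z" by (blast intro: imageI)+
  then show False by simp
qed

lemma dynamically_colorable_if_clique_neighbors:
  assumes sg: "simple_graph W F"
    and clique: "\<And>a b. a \<in> neighbors F v \<Longrightarrow> b \<in> neighbors F v \<Longrightarrow> a \<noteq> b \<Longrightarrow> {a, b} \<in> F"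
    and "card (neighbors F v) + 3 \<le> m"
    and "dynamically_colorable (W - {v}) (edges_avoiding F v) m"
  shows "dynamically_colorable W F m"
proof -
  let ?N = "neighbors F v"
  obtain c where c: "dynamic_coloring (W - {v}) (edges_avoiding F v) m c"
    using assms(4) unfolding dynamically_colorable_def by blast
  have "happy F c v"
  proof (cases "card ?N \<le> 1")
    case False
    with card_le_Suc0_iff_eq[OF finite_neighbors[OF sg, of v]]
    obtain a b where ab: "a \<in> ?N" "b \<in> ?N" "a \<noteq> b" by auto
    have "v \<notin> {a, b}" using neighbors_subset[OF sg] ab(1,2) by blast
    with clique[OF ab] have "{a, b} \<in> edges_avoiding F v" unfolding edges_avoiding_def by simp
    with c have "c a \<noteq> c b" unfolding dynamic_coloring_def proper_coloring_def by blast
    with ab show ?thesis unfolding happy_def by blast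
  qed (simp add: happy_def)
  moreover have "card (blocked_colors F v c) < m"
  proof (cases "2 \<le> card ?N")
    case True
    have "blocked_colors F v c = c ` ?N"
      using sg clique True by (rule blocked_colors_clique)
    with card_image_le[OF finite_neighbors[OF sg, of v], where f = c] assms(3) show ?thesis by simp
  next
    case False
    have "card {u \<in> ?N. is_singleton (c ` neighbors (edges_avoiding F v) u)} \<le> card ?N"
      using finite_neighbors[OF sg, of v] by (intro card_mono) auto
    with card_blocked_colors_le[OF finite_neighbors[OF sg, of v], where c = c] False assms(3)
    show ?thesis by linarith
  qed
  ultimately show ?thesis
    by (rule dynamically_colorable_extend[OF sg subset_refl Un_upper1 c])
qed

lemma dynamically_colorable_if_nonadjacent_neighbors:
  assumes sg: "simple_graph W F" and min: "\<And>u. u \<in> W \<Longrightarrow> degree F v \<le> degree F u"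
    and "card (neighbors F v) + 3 \<le> m"
    and ab: "a \<in> neighbors F v" "b \<in> neighbors F v" "a \<noteq> b"
    and "dynamically_colorable (W - {v}) (insert {a, b} (edges_avoiding F v)) m"
  shows "dynamically_colorable W F m"
proof -
  let ?N = "neighbors F v" and ?F' = "insert {a, b} (edges_avoiding F v)"
  obtain c where c: "dynamic_coloring (W - {v}) ?F' m c"
    using assms(7) unfolding dynamically_colorable_def by blast
  have "?F' \<subseteq> edges_avoiding F v \<union> {{x, y} | x y. x \<in> ?N \<and> y \<in> ?N}" using ab(1,2) by blast
  moreover have "c a \<noteq> c b" using c unfolding dynamic_coloring_def proper_coloring_def by blast
  with ab have "happy F c v" unfolding happy_def by blast
  moreover have "card (blocked_colors F v c) < m"
  proof -
    have "\<And>w. w \<in> W - {v} \<Longrightarrow> happy ?F' c w" using c unfolding dynamic_coloring_def by blast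
    from monochromatic_neighbors_suppressed[OF sg min ab this]
    have "card {u \<in> ?N. is_singleton (c ` neighbors (edges_avoiding F v) u)} \<le> card {a, b}"
      by (simp add: card_mono)
    with card_blocked_colors_le[OF finite_neighbors[OF sg, of v], where c = c] assms(3) ab(3)
    show ?thesis by simp
  qed
  ultimately show ?thesis
    by (rule dynamically_colorable_extend[OF sg subset_insertI _ c])
qed

lemma dynamically_colorable_reduce:
  assumes tm: "topological_minor W F V E"
    and min: "\<And>u. u \<in> W \<Longrightarrow> degree F v \<le> degree F u" and deg: "card (neighbors F v) + 3 \<le> m"
    and IH: "\<And>F'. topological_minor (W - {v}) F' V E \<Longrightarrow> dynamically_colorable (W - {v}) F' m"
  shows "dynamically_colorable W F m"
proof -
  have sg: "simple_graph W F" using tm unfolding topological_minor_def by blast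
  show ?thesis
  proof (cases "\<forall>a\<in>neighbors F v. \<forall>b\<in>neighbors F v. a \<noteq> b \<longrightarrow> {a, b} \<in> F")
    case True
    have "topological_minor (W - {v}) (edges_avoiding F v) V E"
      using tm simple_graph_delete_vertex[OF sg] Diff_subset
      by (rule topological_minor_subgraph) (auto simp: edges_avoiding_def)
    then have "dynamically_colorable (W - {v}) (edges_avoiding F v) m" by (rule IH)
    with True show ?thesis using dynamically_colorable_if_clique_neighbors[OF sg _ deg] by blast
  next
    case False
    then obtain a b where ab: "a \<in> neighbors F v" "b \<in> neighbors F v" "a \<noteq> b" "{a, b} \<notin> F"
      by blast
    then have "{a, v} \<in> F" "{b, v} \<in> F" unfolding neighbors_def by auto
    with ab have "topological_minor (W - {v}) (insert {a, b} (edges_avoiding F v)) V E"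
      by (intro topological_minor_suppress_vertex[OF tm])
    then have "dynamically_colorable (W - {v}) (insert {a, b} (edges_avoiding F v)) m" by (rule IH)
    then show ?thesis
      using dynamically_colorable_if_nonadjacent_neighbors[OF sg min deg ab(1-3)] by blast
  qed
qed

lemma dynamically_colorable_topological_minor:
  fixes W :: "'a set"
  assumes degenerate: "\<forall>(VH :: 'a set) EH. topological_minor VH EH V E \<and> VH \<noteq> {}
           \<longrightarrow> (\<exists>v\<in>VH. degree EH v \<le> k)"
    and "topological_minor W F V E"
  shows "dynamically_colorable W F (k + 3)"
  using assms(2)
proof (induction "card W" arbitrary: W F rule: less_induct)
  case less
  have sg: "simple_graph W F" using less.prems unfolding topological_minor_def by blast
  show ?case
  proof (cases "W = {}")
    case True
    with sg have "F = {}" unfolding simple_graph_def by auto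
    with True show ?thesis
      unfolding dynamically_colorable_def dynamic_coloring_def proper_coloring_def by auto
  next
    case False
    have "finite W" using sg unfolding simple_graph_def by blast
    have "Min (degree F ` W) \<in> degree F ` W" using \<open>finite W\<close> False by simp
    then obtain v where "v \<in> W" "degree F v = Min (degree F ` W)" by (metis imageE)
    with \<open>finite W\<close> have min: "\<And>u. u \<in> W \<Longrightarrow> degree F v \<le> degree F u" by simp
    obtain u where "u \<in> W" "degree F u \<le> k"
      using degenerate[rule_format, of W F] less.prems False by blast
    with min have "card (neighbors F v) + 3 \<le> k + 3" unfolding degree_def by fastforce
    moreover have "card (W - {v}) < card W" using \<open>finite W\<close> \<open>v \<in> W\<close> by (rule card_Diff1_less)
    ultimately show ?thesis
      using dynamically_colorable_reduce[OF less.prems min] less.hyps by blast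
  qed
qed

theorem lemma6p2:
  fixes V :: "'a set" and E :: "'a set set" and k :: nat
  assumes "simple_graph V E"
    and "\<forall>(VH :: 'a set) EH. topological_minor VH EH V E \<and> VH \<noteq> {}
           \<longrightarrow> (\<exists>v\<in>VH. degree EH v \<le> k)"
  shows "dynamically_colorable V E (k + 3)"
  using dynamically_colorable_topological_minor[OF assms(2) topological_minor_refl[OF assms(1)]] .

end
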